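(* A topological space $X$ is $H^*$-$T_{1/2}$ if and only if for each $x\in X$ the singleton $\{x\}$ is $H^*$-open or $H^*$-closed in $X$.
   Context: Let $(X,\tau)$ be a topological space, with closure $\mathrm{cl}$ and interior $\mathrm{int}$. A set $A\subseteq X$ is semi-open if $A\subseteq\mathrm{cl}(\mathrm{int}(A))$; semi-closed if its complement is semi-open; $\mathrm{scl}(A)$ is the intersection of all semi-closed sets containing $A$. $A$ is $w$-closed if $\mathrm{cl}(A)\subseteq U$ whenever $A\subseteq U$ and $U$ is semi-open; $w$-open if its complement is $w$-closed. $A$ is $h$-closed if $\mathrm{scl}(A)\subseteq U$ whenever $A\subseteq U$ and $U$ is $w$-open; $h\text{-}\mathrm{cl}(A)$ is the intersection of all $h$-closed sets containing $A$. $A$ is an $\alpha^*$-set if $\mathrm{int}(\mathrm{cl}(\mathrm{int}(A)))=\mathrm{int}(A)$, and a $C$-set if $A=U\cap V$ with $U$ open and $V$ an $\alpha^*$-set. $A$ is $hCg$-closed if $h\text{-}\mathrm{cl}(A)\subseteq U$ whenever $A\subseteq U$ and $U$ is a $C$-set; $hCg$-open if its complement is $hCg$-closed. $A$ is $H^*$-closed if $h\text{-}\mathrm{cl}(A)\subseteq U$ whenever $A\subseteq U$ and $U$ is $hCg$-open; $H^*$-open if its complement is $H^*$-closed; $H^*\text{-}\mathrm{cl}(A)$ is the intersection of all $H^*$-closed sets containing $A$. $A$ is $gH^*$-closed if $H^*\text{-}\mathrm{cl}(A)\subseteq U$ whenever $A\subseteq U$ and $U$ is $H^*$-open. $X$ is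 $H^*$-$T_{1/2}$ if every $gH^*$-closed subset of $X$ is $H^*$-closed. *)

theory Defs
  imports "HOL-Analysis.Analysis"
begin

definition semi_open :: "'a topology \<Rightarrow> 'a set \<Rightarrow> bool" where
  "semi_open T A \<longleftrightarrow> A \<subseteq> topspace T \<and> A \<subseteq> T closure_of (T interior_of A)"

definition semi_closed :: "'a topology \<Rightarrow> 'a set \<Rightarrow> bool" where
  "semi_closed T A \<longleftrightarrow> A \<subseteq> topspace T \<and> semi_open T (topspace T - A)"

definition scl :: "'a topology \<Rightarrow> 'a set \<Rightarrow> 'a set" where
  "scl T A = \<Inter> {F. semi_closed T F \<and> A \<subseteq> F}"

definition w_closed :: "'a topology \<Rightarrow> 'a set \<Rightarrow> bool" where
  "w_closed T A \<longleftrightarrow> A \<subseteq> topspace T \<and>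
     (\<forall>U. semi_open T U \<and> A \<subseteq> U \<longrightarrow> T closure_of A \<subseteq> U)"

definition w_open :: "'a topology \<Rightarrow> 'a set \<Rightarrow> bool" where
  "w_open T A \<longleftrightarrow> A \<subseteq> topspace T \<and> w_closed T (topspace T - A)"

definition h_closed :: "'a topology \<Rightarrow> 'a set \<Rightarrow> bool" where
  "h_closed T A \<longleftrightarrow> A \<subseteq> topspace T \<and>
     (\<forall>U. w_open T U \<and> A \<subseteq> U \<longrightarrow> scl T A \<subseteq> U)"

definition h_cl :: "'a topology \<Rightarrow> 'a set \<Rightarrow> 'a set" where
  "h_cl T A = \<Inter> {F. h_closed T F \<and> A \<subseteq> F}"

definition alpha_star_set :: "'a topology \<Rightarrow> 'a set \<Rightarrow> bool" where
  "alpha_star_set T A \<longleftrightarrow> A \<subseteq> topspace T \<and>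
     T interior_of (T closure_of (T interior_of A)) = T interior_of A"

definition C_set :: "'a topology \<Rightarrow> 'a set \<Rightarrow> bool" where
  "C_set T A \<longleftrightarrow> (\<exists>U V. openin T U \<and> alpha_star_set T V \<and> A = U \<inter> V)"

definition hCg_closed :: "'a topology \<Rightarrow> 'a set \<Rightarrow> bool" where
  "hCg_closed T A \<longleftrightarrow> A \<subseteq> topspace T \<and>
     (\<forall>U. C_set T U \<and> A \<subseteq> U \<longrightarrow> h_cl T A \<subseteq> U)"

definition hCg_open :: "'a topology \<Rightarrow> 'a set \<Rightarrow> bool" where
  "hCg_open T A \<longleftrightarrow> A \<subseteq> topspace T \<and> hCg_closed T (topspace T - A)"

definition Hstar_closed :: "'a topology \<Rightarrow> 'a set \<Rightarrow> bool" where
  "Hstar_closed T A \<longleftrightarrow> A \<subseteq> topspace T \<and>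
     (\<forall>U. hCg_open T U \<and> A \<subseteq> U \<longrightarrow> h_cl T A \<subseteq> U)"

definition Hstar_open :: "'a topology \<Rightarrow> 'a set \<Rightarrow> bool" where
  "Hstar_open T A \<longleftrightarrow> A \<subseteq> topspace T \<and> Hstar_closed T (topspace T - A)"

definition Hstar_cl :: "'a topology \<Rightarrow> 'a set \<Rightarrow> 'a set" where
  "Hstar_cl T A = \<Inter> {F. Hstar_closed T F \<and> A \<subseteq> F}"

definition gHstar_closed :: "'a topology \<Rightarrow> 'a set \<Rightarrow> bool" where
  "gHstar_closed T A \<longleftrightarrow> A \<subseteq> topspace T \<and>
     (\<forall>U. Hstar_open T U \<and> A \<subseteq> U \<longrightarrow> Hstar_cl T A \<subseteq> U)"

definition Hstar_T_half :: "'a topology \<Rightarrow> bool" where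
  "Hstar_T_half T \<longleftrightarrow> (\<forall>A. gHstar_closed T A \<longrightarrow> Hstar_closed T A)"

end

theory Submission
  imports Defs
begin

text \<open>For a point \<open>x\<close> either \<open>x \<in> int (cl {x})\<close>, which makes \<open>X - {x}\<close> an \<open>\<alpha>\<^sup>*\<close>-set, or
  \<open>{x}\<close> is closed, or \<open>{x}\<close> is not w-closed, which makes \<open>X - {x}\<close> h-closed. So \<open>X - {x}\<close> is a
  C-set or h-closed, and hCg-closed sets are fixed by \<open>h_cl\<close>.

  The crux is that \<open>H\<^sup>*\<close>-closed sets are closed under intersections. A point \<open>x\<close> of
  \<open>h_cl (\<Inter>\<F>)\<close> outside an hCg-open \<open>U \<supseteq> \<Inter>\<F>\<close> lies outside some \<open>F \<in> \<F>\<close>, and this forces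
  \<open>{x}\<close> to be w-closed with open closure. Such a closure \<open>cl {x}\<close> lies in every h-closed, hence
  in every hCg-closed, set containing \<open>x\<close>; so it is an open neighbourhood of \<open>x\<close> inside
  \<open>X - U\<close>, which cannot meet \<open>\<Inter>\<F> \<subseteq> U\<close>, although \<open>x \<in> h_cl (\<Inter>\<F>) \<subseteq> cl (\<Inter>\<F>)\<close>.

  Hence \<open>H\<^sup>*-cl A\<close> is \<open>H\<^sup>*\<close>-closed, and the theorem follows as for ordinary T_{1/2}
  spaces: the only \<open>H\<^sup>*\<close>-open supersets of \<open>X - {x}\<close> are \<open>X\<close> and \<open>X - {x}\<close>, and a point
  outside a \<open>gH\<^sup>*\<close>-closed set \<open>A\<close> is separated from it by \<open>X - {x}\<close>, which is \<open>H\<^sup>*\<close>-closed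
  or \<open>H\<^sup>*\<close>-open.\<close>

lemma openin_imp_semi_open: "openin T U \<Longrightarrow> semi_open T U"
  unfolding semi_open_def
  by (simp add: interior_of_openin closure_of_subset openin_subset)

lemma closedin_imp_semi_closed: "closedin T C \<Longrightarrow> semi_closed T C"
  unfolding semi_closed_def closedin_def by (simp add: openin_imp_semi_open)

lemma scl_minimal: "semi_closed T S \<Longrightarrow> A \<subseteq> S \<Longrightarrow> scl T A \<subseteq> S"
  unfolding scl_def by (rule Inter_lower) simp

lemma semi_closed_imp_h_closed: "semi_closed T S \<Longrightarrow> h_closed T S"
  unfolding h_closed_def using scl_minimal[of T S S]
  by (auto simp: semi_closed_def)

lemma h_cl_minimal: "h_closed T H \<Longrightarrow> A \<subseteq> H \<Longrightarrow> h_cl T A \<subseteq> H"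
  unfolding h_cl_def by (rule Inter_lower) simp

lemma h_cl_mono: "A \<subseteq> B \<Longrightarrow> h_cl T A \<subseteq> h_cl T B"
  unfolding h_cl_def by (intro Inter_anti_mono) auto

lemma h_cl_subset_topspace: "A \<subseteq> topspace T \<Longrightarrow> h_cl T A \<subseteq> topspace T"
  by (simp add: h_cl_minimal semi_closed_imp_h_closed closedin_imp_semi_closed)

lemma h_cl_subset_closure_of: "A \<subseteq> topspace T \<Longrightarrow> h_cl T A \<subseteq> T closure_of A"
  by (simp add: closedin_imp_semi_closed closure_of_subset h_cl_minimal semi_closed_imp_h_closed)

lemma h_closed_imp_hCg_closed: "h_closed T S \<Longrightarrow> hCg_closed T S"
  unfolding hCg_closed_def using h_cl_minimal[of T S S]
  by (auto simp: h_closed_def)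

lemma closedin_imp_hCg_closed: "closedin T C \<Longrightarrow> hCg_closed T C"
  by (simp add: closedin_imp_semi_closed h_closed_imp_hCg_closed semi_closed_imp_h_closed)

lemma Hstar_closed_topspace: "Hstar_closed T (topspace T)"
  unfolding Hstar_closed_def using h_cl_subset_topspace[of "topspace T" T] by auto

lemma Hstar_closed_h_cl_subset:
  "Hstar_closed T F \<Longrightarrow> hCg_open T U \<Longrightarrow> F \<subseteq> U \<Longrightarrow> h_cl T F \<subseteq> U"
  unfolding Hstar_closed_def by blast

lemma Hstar_cl_minimal: "Hstar_closed T F \<Longrightarrow> A \<subseteq> F \<Longrightarrow> Hstar_cl T A \<subseteq> F"
  unfolding Hstar_cl_def by (rule Inter_lower) simp

lemma openin_imp_C_set: "openin T U \<Longrightarrow> C_set T U"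
  unfolding C_set_def alpha_star_set_def
  by (rule exI[of _ U], rule exI[of _ "topspace T"]) (auto dest: openin_subset)

lemma alpha_star_set_imp_C_set: "alpha_star_set T V \<Longrightarrow> C_set T V"
  unfolding C_set_def alpha_star_set_def
  by (rule exI[of _ "topspace T"], rule exI[of _ V]) auto

lemma alpha_star_set_complement_singleton:
  assumes "x \<in> T interior_of (T closure_of {x})"
  shows "alpha_star_set T (topspace T - {x})"
proof -
  let ?K = "T closure_of {x}"
  have "T closure_of (T interior_of ?K) = ?K"
  proof (rule antisym)
    show "T closure_of (T interior_of ?K) \<subseteq> ?K"
      by (simp add: closure_of_minimal interior_of_subset)
    show "?K \<subseteq> T closure_of (T interior_of ?K)"
      using assms by (simp add: closure_of_mono)
  qed
  then show ?thesis
    unfolding alpha_star_set_def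
    by (simp add: interior_of_complement closure_of_complement)
qed

text \<open>Unless \<open>x \<in> int (cl {x})\<close> or \<open>{x}\<close> is closed, \<open>{x} \<union> (X - cl {x})\<close> is a semi-open
  neighbourhood of \<open>x\<close> not containing \<open>cl {x}\<close>.\<close>

lemma not_w_closed_singleton:
  assumes x: "x \<in> topspace T" and "x \<notin> T interior_of (T closure_of {x})"
    and "\<not> closedin T {x}"
  shows "\<not> w_closed T {x}"
proof
  assume w: "w_closed T {x}"
  let ?O = "topspace T - T closure_of {x}"
  let ?V = "insert x ?O"
  have "?O \<subseteq> T interior_of ?V"
    by (intro interior_of_maximal) auto
  then have "T closure_of ?O \<subseteq> T closure_of (T interior_of ?V)"
    by (rule closure_of_mono)
  moreover have "x \<in> T closure_of ?O"
    using assms by (simp add: closure_of_complement)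
  moreover have "?O \<subseteq> T closure_of ?O"
    by (simp add: closure_of_subset)
  ultimately have "semi_open T ?V"
    unfolding semi_open_def using x by blast
  then have "T closure_of {x} \<subseteq> ?V"
    using w unfolding w_closed_def by blast
  then have "T closure_of {x} \<subseteq> {x}" by blast
  then show False
    using assms closure_of_subset_eq[of "{x}" T] by blast
qed

lemma h_closed_complement_singleton:
  assumes x: "x \<in> topspace T" and "\<not> w_closed T {x}"
  shows "h_closed T (topspace T - {x})"
  unfolding h_closed_def
proof (intro conjI allI impI)
  fix U assume U: "w_open T U \<and> topspace T - {x} \<subseteq> U"
  have "x \<in> U"
  proof (rule ccontr)
    assume "x \<notin> U"
    then have "topspace T - U = {x}"
      using U x unfolding w_open_def by blast
    then show False
      using U assms unfolding w_open_def by simp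
  qed
  then have "U = topspace T"
    using U unfolding w_open_def by blast
  then show "scl T (topspace T - {x}) \<subseteq> U"
    by (simp add: scl_minimal closedin_imp_semi_closed)
qed auto

lemma C_set_or_h_closed_complement_singleton:
  assumes x: "x \<in> topspace T"
  shows "C_set T (topspace T - {x}) \<or> h_closed T (topspace T - {x})"
proof -
  consider "x \<in> T interior_of (T closure_of {x})" | "closedin T {x}" | "\<not> w_closed T {x}"
    using not_w_closed_singleton[OF x] by blast
  then show ?thesis
  proof cases
    case 1
    then show ?thesis
      by (simp add: alpha_star_set_complement_singleton alpha_star_set_imp_C_set)
  next
    case 2
    then show ?thesis
      by (simp add: closedin_def openin_imp_C_set)
  next
    case 3
    then show ?thesis
      by (simp add: h_closed_complement_singleton x)
  qed
qed

lemma h_cl_subset_hCg_closed: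
  assumes B: "hCg_closed T B"
  shows "h_cl T B \<subseteq> B"
proof
  fix y assume y: "y \<in> h_cl T B"
  have BX: "B \<subseteq> topspace T"
    using B unfolding hCg_closed_def by blast
  then have yX: "y \<in> topspace T"
    using y h_cl_subset_topspace by blast
  show "y \<in> B"
  proof (rule ccontr)
    assume "y \<notin> B"
    then have "B \<subseteq> topspace T - {y}"
      using BX by blast
    then have "h_cl T B \<subseteq> topspace T - {y}"
      using C_set_or_h_closed_complement_singleton[OF yX] B h_cl_minimal
      unfolding hCg_closed_def by blast
    then show False
      using y by blast
  qed
qed

lemma w_closed_singleton_closure_subset_open:
  "w_closed T {x} \<Longrightarrow> openin T W \<Longrightarrow> x \<in> W \<Longrightarrow> T closure_of {x} \<subseteq> W"
  unfolding w_closed_def using openin_imp_semi_open[of T W] by blast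

lemma mem_semi_open_of_open_closure:
  assumes K: "openin T (T closure_of {x})" and y: "y \<in> T closure_of {x}"
    and V: "semi_open T V" "y \<in> V"
  shows "x \<in> V"
proof -
  have "y \<in> T closure_of (T interior_of V)"
    using V unfolding semi_open_def by blast
  then have "\<forall>U. y \<in> U \<and> openin T U \<longrightarrow> (\<exists>z. z \<in> T interior_of V \<and> z \<in> U)"
    by (simp add: in_closure_of)
  then obtain z where z: "z \<in> T interior_of V" "z \<in> T closure_of {x}"
    using K y by blast
  have "\<forall>U. z \<in> U \<and> openin T U \<longrightarrow> (\<exists>x'. x' \<in> {x} \<and> x' \<in> U)"
    using z(2) by (simp add: in_closure_of)
  then have "x \<in> T interior_of V"
    using z(1) openin_interior_of[of T V] by blast
  then show ?thesis
    using interior_of_subset[of T V] by blast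
qed

lemma w_closed_singleton_of_open_closure:
  assumes w: "w_closed T {x}" and K: "openin T (T closure_of {x})"
    and y: "y \<in> T closure_of {x}"
  shows "w_closed T {y}"
  unfolding w_closed_def
proof (intro conjI allI impI)
  show "{y} \<subseteq> topspace T"
    using y closure_of_subset_topspace[of T "{x}"] by blast
  fix V assume V: "semi_open T V \<and> {y} \<subseteq> V"
  then have "T closure_of {x} \<subseteq> V"
    using mem_semi_open_of_open_closure[OF K y] w unfolding w_closed_def by blast
  moreover have "T closure_of {y} \<subseteq> T closure_of {x}"
    using y by (intro closure_of_minimal) auto
  ultimately show "T closure_of {y} \<subseteq> V"
    by blast
qed

lemma open_closure_subset_scl:
  assumes K: "openin T (T closure_of {x})" and "x \<in> H"
  shows "T closure_of {x} \<subseteq> scl T H"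
  unfolding scl_def
proof (intro Inter_greatest subsetI)
  fix S y assume S: "S \<in> {F. semi_closed T F \<and> H \<subseteq> F}" and y: "y \<in> T closure_of {x}"
  show "y \<in> S"
  proof (rule ccontr)
    assume "y \<notin> S"
    moreover have "semi_open T (topspace T - S)"
      using S unfolding semi_closed_def by blast
    ultimately have "x \<in> topspace T - S"
      using mem_semi_open_of_open_closure[OF K y] y closure_of_subset_topspace[of T "{x}"] by blast
    then show False
      using S assms by blast
  qed
qed

text \<open>If some \<open>y \<in> cl {x}\<close> escaped \<open>H\<close>, then \<open>X - {y}\<close> would be a \<open>w\<close>-open set containing
  \<open>H\<close> but not \<open>scl H \<supseteq> cl {x}\<close>.\<close>

lemma open_closure_subset_h_closed:
  assumes w: "w_closed T {x}" and K: "openin T (T closure_of {x})"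
    and H: "h_closed T H" "x \<in> H"
  shows "T closure_of {x} \<subseteq> H"
proof
  fix y assume y: "y \<in> T closure_of {x}"
  show "y \<in> H"
  proof (rule ccontr)
    assume yH: "y \<notin> H"
    have yX: "y \<in> topspace T"
      using y closure_of_subset_topspace[of T "{x}"] by blast
    have "topspace T - (topspace T - {y}) = {y}"
      using yX by blast
    then have "w_open T (topspace T - {y})"
      using w_closed_singleton_of_open_closure[OF w K y] unfolding w_open_def by simp
    moreover have "H \<subseteq> topspace T - {y}"
      using H yH unfolding h_closed_def by blast
    ultimately have "scl T H \<subseteq> topspace T - {y}"
      using H unfolding h_closed_def by blast
    then show False
      using open_closure_subset_scl[OF K H(2)] y by blast
  qed
qed

lemma open_closure_subset_hCg_closed:
  assumes w: "w_closed T {x}" and K: "openin T (T closure_of {x})"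
    and B: "hCg_closed T B" "x \<in> B"
  shows "T closure_of {x} \<subseteq> B"
proof -
  have "T closure_of {x} \<subseteq> h_cl T B"
    unfolding h_cl_def using open_closure_subset_h_closed[OF w K] B(2) by blast
  then show ?thesis
    using h_cl_subset_hCg_closed[OF B(1)] by blast
qed

lemma h_cl_diff_Hstar_closed_point:
  assumes F: "Hstar_closed T F" and x: "x \<in> h_cl T F" "x \<notin> F"
  shows "w_closed T {x}" and "openin T (T closure_of {x})"
proof -
  have FX: "F \<subseteq> topspace T"
    using F unfolding Hstar_closed_def by blast
  then have xX: "x \<in> topspace T"
    using x h_cl_subset_topspace[OF FX] by blast
  have F_sub: "F \<subseteq> topspace T - {x}"
    using FX x by blast
  have "\<not> h_closed T (topspace T - {x})"
    using h_cl_minimal[OF _ F_sub, of T] x by blast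
  then show w: "w_closed T {x}"
    using h_closed_complement_singleton[OF xX] by auto
  have "\<not> hCg_closed T {x}"
  proof
    assume "hCg_closed T {x}"
    moreover have "topspace T - (topspace T - {x}) = {x}"
      using xX by blast
    ultimately have "hCg_open T (topspace T - {x})"
      unfolding hCg_open_def by simp
    then have "h_cl T F \<subseteq> topspace T - {x}"
      using Hstar_closed_h_cl_subset[OF F _ F_sub] by blast
    then show False
      using x by blast
  qed
  then have "\<not> closedin T {x}"
    using closedin_imp_hCg_closed by auto
  then have "x \<in> T interior_of (T closure_of {x})"
    using not_w_closed_singleton[OF xX] w by auto
  then have "T closure_of {x} \<subseteq> T interior_of (T closure_of {x})"
    by (simp add: w w_closed_singleton_closure_subset_open)
  then show "openin T (T closure_of {x})"
    using subset_interior_of_eq[of "T closure_of {x}" T] by simp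
qed

lemma Hstar_closed_Inter:
  assumes ne: "\<F> \<noteq> {}" and closed: "\<forall>F\<in>\<F>. Hstar_closed T F"
  shows "Hstar_closed T (\<Inter>\<F>)"
proof -
  have Inter_sub: "\<Inter>\<F> \<subseteq> topspace T"
    using ne closed unfolding Hstar_closed_def by blast
  have "x \<in> U" if U: "hCg_open T U" "\<Inter>\<F> \<subseteq> U" and x: "x \<in> h_cl T (\<Inter>\<F>)" for U x
  proof (rule ccontr)
    assume xU: "x \<notin> U"
    then obtain F where F: "F \<in> \<F>" "x \<notin> F"
      using U(2) by blast
    have "x \<in> h_cl T F"
      using x h_cl_mono[of "\<Inter>\<F>" F T] F(1) by blast
    then have w: "w_closed T {x}" and K: "openin T (T closure_of {x})"
      using h_cl_diff_Hstar_closed_point[of T F x] closed F by auto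
    have x_out: "x \<in> topspace T - U"
      using x xU h_cl_subset_topspace[OF Inter_sub] by blast
    moreover have "hCg_closed T (topspace T - U)"
      using U(1) unfolding hCg_open_def by blast
    ultimately have K_sub: "T closure_of {x} \<subseteq> topspace T - U"
      using open_closure_subset_hCg_closed[OF w K] by blast
    have "x \<in> T closure_of (\<Inter>\<F>)"
      using x h_cl_subset_closure_of[OF Inter_sub] by blast
    moreover have "x \<in> T closure_of {x}"
      using closure_of_subset[of "{x}" T] x_out by blast
    ultimately obtain z where "z \<in> \<Inter>\<F>" "z \<in> T closure_of {x}"
      using K in_closure_of[of x T "\<Inter>\<F>"] by blast
    then show False
      using K_sub U(2) by blast
  qed
  with Inter_sub show ?thesis
    unfolding Hstar_closed_def by blast
qed

lemma Hstar_closed_Hstar_cl: "A \<subseteq> topspace T \<Longrightarrow> Hstar_closed T (Hstar_cl T A)"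
  unfolding Hstar_cl_def using Hstar_closed_topspace[of T]
  by (intro Hstar_closed_Inter) auto

lemma Hstar_closed_if_Hstar_cl_subset:
  assumes "A \<subseteq> topspace T" "Hstar_cl T A \<subseteq> A"
  shows "Hstar_closed T A"
proof -
  have "Hstar_cl T A = A"
    using assms(2) unfolding Hstar_cl_def by blast
  then show ?thesis
    using Hstar_closed_Hstar_cl[OF assms(1)] by simp
qed

lemma gHstar_closed_complement_singleton:
  assumes x: "x \<in> topspace T" and not_closed: "\<not> Hstar_closed T {x}"
  shows "gHstar_closed T (topspace T - {x})"
  unfolding gHstar_closed_def
proof (intro conjI allI impI)
  fix U assume U: "Hstar_open T U \<and> topspace T - {x} \<subseteq> U"
  have "x \<in> U"
  proof (rule ccontr)
    assume "x \<notin> U"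
    then have "topspace T - U = {x}"
      using U x unfolding Hstar_open_def by blast
    then show False
      using U not_closed unfolding Hstar_open_def by simp
  qed
  then have "U = topspace T"
    using U unfolding Hstar_open_def by blast
  then show "Hstar_cl T (topspace T - {x}) \<subseteq> U"
    by (simp add: Hstar_cl_minimal Hstar_closed_topspace)
qed auto

lemma Hstar_cl_subset_if_singletons:
  assumes singletons: "\<forall>x \<in> topspace T. Hstar_open T {x} \<or> Hstar_closed T {x}"
    and A: "gHstar_closed T A"
  shows "Hstar_cl T A \<subseteq> A"
proof
  fix x assume x: "x \<in> Hstar_cl T A"
  have AX: "A \<subseteq> topspace T"
    using A unfolding gHstar_closed_def by blast
  then have xX: "x \<in> topspace T"
    using x Hstar_cl_minimal[OF Hstar_closed_topspace AX] by blast
  show "x \<in> A"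
  proof (rule ccontr)
    assume "x \<notin> A"
    then have A_sub: "A \<subseteq> topspace T - {x}"
      using AX by blast
    have compl: "topspace T - (topspace T - {x}) = {x}"
      using xX by blast
    from singletons xX have "Hstar_cl T A \<subseteq> topspace T - {x}"
    proof (elim ballE disjE)
      assume "Hstar_open T {x}"
      then have "Hstar_closed T (topspace T - {x})"
        unfolding Hstar_open_def by blast
      then show ?thesis
        using A_sub by (rule Hstar_cl_minimal)
    next
      assume "Hstar_closed T {x}"
      then have "Hstar_open T (topspace T - {x})"
        unfolding Hstar_open_def using compl by simp
      then show ?thesis
        using A A_sub unfolding gHstar_closed_def by simp
    qed simp
    then show False
      using x by blast
  qed
qed

theorem theorem5p2:
  fixes T :: "'a topology"
  shows "Hstar_T_half T \<longleftrightarrow>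
         (\<forall>x \<in> topspace T. Hstar_open T {x} \<or> Hstar_closed T {x})"
proof
  assume half: "Hstar_T_half T"
  show "\<forall>x \<in> topspace T. Hstar_open T {x} \<or> Hstar_closed T {x}"
  proof (intro ballI disjCI)
    fix x assume x: "x \<in> topspace T" and "\<not> Hstar_closed T {x}"
    then have "gHstar_closed T (topspace T - {x})"
      by (rule gHstar_closed_complement_singleton)
    then have "Hstar_closed T (topspace T - {x})"
      using half unfolding Hstar_T_half_def by blast
    then show "Hstar_open T {x}"
      unfolding Hstar_open_def using x by simp
  qed
next
  assume singletons: "\<forall>x \<in> topspace T. Hstar_open T {x} \<or> Hstar_closed T {x}"
  show "Hstar_T_half T"
    unfolding Hstar_T_half_def
  proof (intro allI impI)
    fix A assume A: "gHstar_closed T A"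
    then have "A \<subseteq> topspace T"
      unfolding gHstar_closed_def by blast
    then show "Hstar_closed T A"
      using Hstar_closed_if_Hstar_cl_subset Hstar_cl_subset_if_singletons[OF singletons A]
      by blast
  qed
qed

end
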